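(* (Gillett's conjecture.) Let $m=3$ and $n\ge1$, and let $k=\lfloor n/2\rfloor$. For every probability vector $p=(p_1,\dots,p_6)$ on the six rankings, $$P(3,n;p)\;\ge\;3\Bigl(1-B\bigl(k;n,\tfrac13\bigr)\Bigr)=3n\binom{n-1}{k}\int_0^{1/3}t^k(1-t)^{n-k-1}\,dt,$$ with equality when $p_1=p_4=p_5=\frac13$, $p_2=p_3=p_6=0$ (and also when $p_2=p_3=p_6=\frac13$, $p_1=p_4=p_5=0$). Hence these distributions minimize the probability of a Condorcet winner.
   Context: Three candidates $C_1,C_2,C_3$ and six rankings with probabilities $p_1$ ($C_1C_2C_3$), $p_2$ ($C_1C_3C_2$), $p_3$ ($C_2C_1C_3$), $p_4$ ($C_2C_3C_1$), $p_5$ ($C_3C_1C_2$), $p_6$ ($C_3C_2C_1$), listed best to worst. $n$ voters independently choose rankings with these probabilities. A candidate is a Condorcet winner if, for every other candidate, strictly more than $n/2$ voters rank it above that candidate. $P(3,n;p)$ is the probability that a Condorcet winner exists. $B(k;n,q)=\sum_{j=0}^{k}\binom nj q^j(1-q)^{n-j}$ is the binomial cumulative distribution function. *)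

theory Defs
  imports "HOL-Analysis.Analysis"
begin

text \<open>Candidates are 1, 2, 3 (for C1, C2, C3). Rankings are indexed 1..6 as in the
paper; ranking_list r lists the candidates from best to worst.\<close>

fun ranking_list :: "nat \<Rightarrow> nat list" where
  "ranking_list r =
     (if r = 1 then [1,2,3] else if r = 2 then [1,3,2] else if r = 3 then [2,1,3]
      else if r = 4 then [2,3,1] else if r = 5 then [3,1,2] else [3,2,1])"

definition rankings :: "nat set" where
  "rankings = {1..6}"

definition candidates :: "nat set" where
  "candidates = {1,2,3}"

definition prefers :: "nat \<Rightarrow> nat \<Rightarrow> nat \<Rightarrow> bool" where
  "prefers r a b \<longleftrightarrow> (\<exists>i j. i < j \<and> j < length (ranking_list r) \<and>
       ranking_list r ! i = a \<and> ranking_list r ! j = b)"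

definition condorcet_winner :: "nat \<Rightarrow> (nat \<Rightarrow> nat) \<Rightarrow> nat \<Rightarrow> bool" where
  "condorcet_winner n f c \<longleftrightarrow> c \<in> candidates \<and>
     (\<forall>d \<in> candidates. d \<noteq> c \<longrightarrow> real (card {i \<in> {..<n}. prefers (f i) c d}) > real n / 2)"

definition has_condorcet_winner :: "nat \<Rightarrow> (nat \<Rightarrow> nat) \<Rightarrow> bool" where
  "has_condorcet_winner n f \<longleftrightarrow> (\<exists>c. condorcet_winner n f c)"

text \<open>P(3,n;p): probability that a Condorcet winner exists when n voters
independently choose ranking r with probability p r.\<close>
definition P3 :: "nat \<Rightarrow> (nat \<Rightarrow> real) \<Rightarrow> real" where
  "P3 n p = (\<Sum>f \<in> {..<n} \<rightarrow>\<^sub>E rankings.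
              if has_condorcet_winner n f then (\<Prod>i<n. p (f i)) else 0)"

definition prob_vector :: "(nat \<Rightarrow> real) \<Rightarrow> bool" where
  "prob_vector p \<longleftrightarrow> (\<forall>r \<in> rankings. p r \<ge> 0) \<and> (\<Sum>r \<in> rankings. p r) = 1"

definition binom_cdf :: "nat \<Rightarrow> nat \<Rightarrow> real \<Rightarrow> real" where
  "binom_cdf k n q = (\<Sum>j = 0..k. real (n choose j) * q ^ j * (1 - q) ^ (n - j))"

end

theory Submission
  imports Defs
begin

text \<open>
  A Condorcet winner certainly exists when some candidate is ranked first by a strict majority
  of the voters, and at most one candidate can be. The number of voters ranking c first is
  binomial with parameters n and q(c), the total probability of the two rankings headed by c.
  Hence P(3,n;p) is at least T(q(1)) + T(q(2)) + T(q(3)), where T(q) = 1 - B(k;n,q) with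
  k = \<lfloor>n/2\<rfloor>, and q(1) + q(2) + q(3) = 1.
  Since T'(q) = n (n-1 choose k) q^k (1-q)^(n-1-k) and k \<ge> n-1-k, T' increases on [0,1/2],
  so T is convex there and Jensen's inequality gives the bound 3 T(1/3) when all q(c) \<le> 1/2.
  If some q(c) exceeds 1/2, lowering it to 1/2 while splitting the remaining mass evenly only
  decreases the sum, because T'(q) \<ge> T'((1-q)/2) for q \<ge> 1/2.
  For the two cyclic distributions a Condorcet winner c beats the candidate following it in the
  cycle only with the voters who rank c first, so the bound is attained there. The integral
  formula is the fundamental theorem of calculus applied to T.
\<close>

section \<open>Binomial tail probabilities\<close>

lemma binom_cdf_0 [simp]: "binom_cdf k n 0 = 1"
  unfolding binom_cdf_def by (simp add: power_0_left if_distrib[of "(*) _"] cong: if_cong)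

lemma binom_cdf_has_real_derivative:
  fixes x :: real
  assumes "k < n"
  shows "(binom_cdf k n has_real_derivative
           - real n * real ((n - 1) choose k) * x ^ k * (1 - x) ^ (n - 1 - k)) (at x)"
  using assms
proof (induction k)
  case 0
  have "binom_cdf 0 n = (\<lambda>x. (1 - x) ^ n)"
    by (simp add: binom_cdf_def fun_eq_iff)
  moreover have "((\<lambda>x. (1 - x) ^ n) has_real_derivative real n * (1 - x) ^ (n - 1) * (0 - 1)) (at x)"
    by (rule derivative_eq_intros refl)+ simp
  ultimately show ?case
    by simp
next
  case (Suc k)
  obtain m where n: "n = Suc (k + Suc m)"
    using less_imp_Suc_add [OF Suc.prems] by auto
  have step: "binom_cdf (Suc k) n
      = (\<lambda>x. binom_cdf k n x + real (n choose Suc k) * x ^ Suc k * (1 - x) ^ Suc m)"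
    by (simp add: binom_cdf_def fun_eq_iff n)
  have "Suc k * (n choose Suc k) = n * ((n - 1) choose k)"
    using Suc_times_binomial [of k "n - 1"] n by simp
  then have absorb1: "real (Suc k) * real (n choose Suc k) = real n * real ((n - 1) choose k)"
    by (metis of_nat_mult)
  have "Suc m * (n choose Suc k) = n * ((n - 1) choose Suc k)"
    using binomial_absorb_comp [of n "Suc k"] n by simp
  then have absorb2: "real (Suc m) * real (n choose Suc k) = real n * real ((n - 1) choose Suc k)"
    by (metis of_nat_mult)
  have exponents: "n - 1 - k = Suc m" "n - 1 - Suc k = m"
    using n by simp_all
  then have IH: "(binom_cdf k n has_real_derivative
      - real n * real ((n - 1) choose k) * x ^ k * (1 - x) ^ Suc m) (at x)"
    using Suc by simp
  have deriv: "((\<lambda>x. binom_cdf k n x + real (n choose Suc k) * x ^ Suc k * (1 - x) ^ Suc m)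
      has_real_derivative
        - real n * real ((n - 1) choose k) * x ^ k * (1 - x) ^ Suc m
        + real (n choose Suc k) * (real (Suc k) * x ^ k * (1 - x) ^ Suc m
                                   - x ^ Suc k * (real (Suc m) * (1 - x) ^ m))) (at x)"
    by (rule derivative_eq_intros IH refl)+ (simp add: algebra_simps)
  have "real (n choose Suc k) * (real (Suc k) * x ^ k * (1 - x) ^ Suc m
                                 - x ^ Suc k * (real (Suc m) * (1 - x) ^ m))
      = real (Suc k) * real (n choose Suc k) * (x ^ k * (1 - x) ^ Suc m)
        - real (Suc m) * real (n choose Suc k) * (x ^ Suc k * (1 - x) ^ m)"
    by (simp only: algebra_simps)
  also have "\<dots> = real n * real ((n - 1) choose k) * (x ^ k * (1 - x) ^ Suc m)
                 - real n * real ((n - 1) choose Suc k) * (x ^ Suc k * (1 - x) ^ m)"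
    by (simp only: absorb1 absorb2)
  finally have "- real n * real ((n - 1) choose k) * x ^ k * (1 - x) ^ Suc m
        + real (n choose Suc k) * (real (Suc k) * x ^ k * (1 - x) ^ Suc m
                                   - x ^ Suc k * (real (Suc m) * (1 - x) ^ m))
      = - real n * real ((n - 1) choose Suc k) * x ^ Suc k * (1 - x) ^ (n - 1 - Suc k)"
    unfolding exponents by (simp add: algebra_simps)
  then show ?case
    using deriv by (simp only: step)
qed

definition binom_tail :: "nat \<Rightarrow> nat \<Rightarrow> real \<Rightarrow> real" where
  "binom_tail k n q = 1 - binom_cdf k n q"

lemma binom_tail_0 [simp]: "binom_tail k n 0 = 0"
  by (simp add: binom_tail_def)

lemma binom_tail_has_real_derivative:
  fixes x :: real
  assumes "k < n"
  shows "(binom_tail k n has_real_derivative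
           real n * real ((n - 1) choose k) * (x ^ k * (1 - x) ^ (n - 1 - k))) (at x)"
  using DERIV_diff [OF DERIV_const [of 1] binom_cdf_has_real_derivative [OF assms]]
  by (simp add: binom_tail_def [abs_def] mult.assoc)

lemma power_mult_one_minus_power_mono:
  fixes x y :: real
  assumes "m \<le> k" "0 \<le> x" "x \<le> y" "y \<le> 1/2"
  shows "x ^ k * (1 - x) ^ m \<le> y ^ k * (1 - y) ^ m"
proof -
  have split: "z ^ k * (1 - z) ^ m = (z * (1 - z)) ^ m * z ^ (k - m)" for z :: real
    using assms(1) by (simp add: power_mult_distrib power_add [symmetric] mult_ac)
  have "0 \<le> (y - x) * (1 - x - y)"
    using assms by (intro mult_nonneg_nonneg) auto
  then have "x * (1 - x) \<le> y * (1 - y)"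
    by (simp add: algebra_simps)
  then have "(x * (1 - x)) ^ m \<le> (y * (1 - y)) ^ m"
    using assms by (intro power_mono) auto
  moreover have "x ^ (k - m) \<le> y ^ (k - m)"
    using assms by (intro power_mono) auto
  ultimately have "(x * (1 - x)) ^ m * x ^ (k - m) \<le> (y * (1 - y)) ^ m * y ^ (k - m)"
    using assms by (intro mult_mono) auto
  then show ?thesis
    by (simp only: split)
qed

lemma power_mult_one_minus_power_reflect_le:
  fixes x :: real
  assumes "m \<le> k" "1/2 \<le> x" "x \<le> 1"
  shows "((1 - x) / 2) ^ k * (1 - (1 - x) / 2) ^ m \<le> x ^ k * (1 - x) ^ m"
proof -
  have split: "z ^ k * (1 - z) ^ m = (z * (1 - z)) ^ m * z ^ (k - m)" for z :: real
    using assms(1) by (simp add: power_mult_distrib power_add [symmetric] mult_ac)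
  define d where "d = (1 - x) / 2"
  have "0 \<le> d" "d \<le> x" "d \<le> 1" "1 - d \<le> 2 * x" "1 - x = 2 * d"
    using assms by (simp_all add: d_def field_simps)
  then have "d * (1 - d) \<le> d * (2 * x)"
    by (intro mult_left_mono)
  then have "d * (1 - d) \<le> x * (2 * d)"
    by (simp add: mult.commute mult.left_commute)
  then have "(d * (1 - d)) ^ m \<le> (x * (2 * d)) ^ m"
    using \<open>0 \<le> d\<close> \<open>d \<le> 1\<close> by (intro power_mono) auto
  moreover have "d ^ (k - m) \<le> x ^ (k - m)"
    using \<open>0 \<le> d\<close> \<open>d \<le> x\<close> by (intro power_mono) auto
  ultimately have "(d * (1 - d)) ^ m * d ^ (k - m) \<le> (x * (2 * d)) ^ m * x ^ (k - m)"
    using \<open>0 \<le> d\<close> \<open>d \<le> x\<close> by (intro mult_mono) auto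
  then show ?thesis
    unfolding d_def [symmetric] unfolding split unfolding \<open>1 - x = 2 * d\<close> .
qed

lemma convex_on_binom_tail:
  assumes "k < n" "n \<le> 2 * k + 1"
  shows "convex_on {0..1/2} (binom_tail k n)"
proof (rule convex_on_realI)
  show "(binom_tail k n has_real_derivative
          real n * real ((n - 1) choose k) * (x ^ k * (1 - x) ^ (n - 1 - k))) (at x)" for x :: real
    using assms(1) by (rule binom_tail_has_real_derivative)
  show "real n * real ((n - 1) choose k) * (x ^ k * (1 - x) ^ (n - 1 - k))
      \<le> real n * real ((n - 1) choose k) * (y ^ k * (1 - y) ^ (n - 1 - k))"
    if "x \<in> {0..1/2}" "y \<in> {0..1/2}" "x \<le> y" for x y :: real
    using that assms by (intro mult_left_mono power_mult_one_minus_power_mono) auto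
qed simp

lemma convex_on_midpoint:
  fixes G :: "real \<Rightarrow> real"
  assumes G: "convex_on A G" and "a \<in> A" "b \<in> A"
  shows "2 * G ((a + b) / 2) \<le> G a + G b"
proof -
  have mid: "(1 - 1/2) *\<^sub>R a + (1/2) *\<^sub>R b = (a + b) / 2"
    by simp
  have "G ((a + b) / 2) \<le> (1 - 1/2) * G a + (1/2) * G b"
    using convex_onD [OF G, of "1/2" a b] assms unfolding mid by simp
  then show ?thesis
    by simp
qed

lemma convex_on_three_mean:
  fixes G :: "real \<Rightarrow> real"
  assumes G: "convex_on A G" and abc: "a \<in> A" "b \<in> A" "c \<in> A"
  shows "3 * G ((a + b + c) / 3) \<le> G a + G b + G c"
proof -
  have mid: "(1 - 1/2) *\<^sub>R a + (1/2) *\<^sub>R b = (a + b) / 2"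
    and third: "(1 - 1/3) *\<^sub>R ((a + b) / 2) + (1/3) *\<^sub>R c = (a + b + c) / 3"
    by simp_all
  have "(a + b) / 2 \<in> A"
    using convexD_alt [OF convex_on_imp_convex [OF G] abc(1,2), of "1/2"] unfolding mid by simp
  then have "G ((a + b + c) / 3) \<le> (1 - 1/3) * G ((a + b) / 2) + (1/3) * G c"
    using convex_onD [OF G, of "1/3" "(a + b) / 2" c] abc unfolding third by simp
  moreover have "2 * G ((a + b) / 2) \<le> G a + G b"
    using G abc(1,2) by (rule convex_on_midpoint)
  ultimately show ?thesis
    by simp
qed

lemma binom_tail_reflect_mono:
  assumes "k < n" "n \<le> 2 * k + 1" "1/2 \<le> c" "c \<le> 1"
  shows "binom_tail k n (1/2) + 2 * binom_tail k n (1/4)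
       \<le> binom_tail k n c + 2 * binom_tail k n ((1 - c) / 2)"
proof -
  define K where "K = real n * real ((n - 1) choose k)"
  define F where "F x = binom_tail k n x + 2 * binom_tail k n ((1 - x) / 2)" for x
  have tail': "(binom_tail k n has_real_derivative K * (x ^ k * (1 - x) ^ (n - 1 - k))) (at x)" for x :: real
    unfolding K_def using assms(1) by (rule binom_tail_has_real_derivative)
  have F': "(F has_real_derivative
      K * (x ^ k * (1 - x) ^ (n - 1 - k)) - K * (((1 - x) / 2) ^ k * (1 - (1 - x) / 2) ^ (n - 1 - k))) (at x)"
    for x :: real
    unfolding F_def [abs_def]
    by (rule derivative_eq_intros tail' [THEN DERIV_chain2] refl | simp)+
  have "F (1/2) \<le> F c"
  proof (rule DERIV_nonneg_imp_increasing_open [OF assms(3)])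
    fix x :: real assume "1/2 < x" "x < c"
    then have "K * (((1 - x) / 2) ^ k * (1 - (1 - x) / 2) ^ (n - 1 - k)) \<le> K * (x ^ k * (1 - x) ^ (n - 1 - k))"
      using assms by (intro mult_left_mono power_mult_one_minus_power_reflect_le) (auto simp: K_def)
    then show "\<exists>y. (F has_real_derivative y) (at x) \<and> 0 \<le> y"
      using F' by force
  next
    show "continuous_on {1/2..c} F"
      using F' by (intro continuous_at_imp_continuous_on ballI DERIV_isCont) blast
  qed
  then show ?thesis
    by (simp add: F_def)
qed

lemma binom_tail_third_le:
  assumes kn: "k < n" "n \<le> 2 * k + 1"
    and abc: "0 \<le> a" "0 \<le> b" "0 \<le> c" "a + b + c = 1"
  shows "3 * binom_tail k n (1/3) \<le> binom_tail k n a + binom_tail k n b + binom_tail k n c"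
proof -
  let ?G = "binom_tail k n"
  have convex: "convex_on {0..1/2} ?G"
    using kn by (rule convex_on_binom_tail)
  have small: "3 * ?G (1/3) \<le> ?G a + ?G b + ?G c"
    if "a \<in> {0..1/2}" "b \<in> {0..1/2}" "c \<in> {0..1/2}" "a + b + c = 1" for a b c
    using convex_on_three_mean [OF convex that(1-3)] that(4) by simp
  have large: "3 * ?G (1/3) \<le> ?G a + ?G b + ?G c"
    if "0 \<le> a" "0 \<le> b" "1/2 < c" "a + b + c = 1" for a b c
  proof -
    have "3 * ?G (1/3) \<le> ?G (1/2) + 2 * ?G (1/4)"
      using small [of "1/4" "1/4" "1/2"] by simp
    also have "\<dots> \<le> ?G c + 2 * ?G ((1 - c) / 2)"
      using kn that by (intro binom_tail_reflect_mono) auto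
    also have "(1 - c) / 2 = (a + b) / 2"
      using that by simp
    also have "2 * ?G ((a + b) / 2) \<le> ?G a + ?G b"
      using that by (intro convex_on_midpoint [OF convex]) auto
    finally show ?thesis
      by simp
  qed
  consider "1/2 < a" | "1/2 < b" | "1/2 < c" | "a \<le> 1/2" "b \<le> 1/2" "c \<le> 1/2"
    by linarith
  then show ?thesis
    using abc small [of a b c] large [of b c a] large [of a c b] large [of a b c]
    by cases (simp_all add: algebra_simps)
qed

lemma binom_tail_eq_integral:
  fixes q :: real
  assumes "k < n" "0 \<le> q"
  shows "binom_tail k n q
       = real n * real ((n - 1) choose k) * integral {0..q} (\<lambda>t. t ^ k * (1 - t) ^ (n - k - 1))"
proof -
  have "((\<lambda>t. real n * real ((n - 1) choose k) * (t ^ k * (1 - t) ^ (n - k - 1)))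
        has_integral binom_tail k n q - binom_tail k n 0) {0..q}"
    using assms binom_tail_has_real_derivative [OF assms(1)]
    by (intro fundamental_theorem_of_calculus)
       (auto simp: has_real_derivative_iff_has_vector_derivative [symmetric] diff_right_commute
             intro: has_field_derivative_at_within)
  then have "((\<lambda>t. real n * real ((n - 1) choose k) * (t ^ k * (1 - t) ^ (n - k - 1)))
        has_integral binom_tail k n q) {0..q}"
    by simp
  then have "integral {0..q} (\<lambda>t. real n * real ((n - 1) choose k) * (t ^ k * (1 - t) ^ (n - k - 1)))
      = binom_tail k n q"
    by (rule integral_unique)
  then show ?thesis
    by simp
qed

section \<open>Probabilities of random voter profiles\<close>

definition profile_prob :: "nat \<Rightarrow> 'a set \<Rightarrow> ('a \<Rightarrow> real) \<Rightarrow> ((nat \<Rightarrow> 'a) \<Rightarrow> bool) \<Rightarrow> real" where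
  "profile_prob n R p E = (\<Sum>f \<in> {..<n} \<rightarrow>\<^sub>E R. if E f then \<Prod>i<n. p (f i) else 0)"

lemma profile_prob_0: "profile_prob 0 R p E = (if E (\<lambda>_. undefined) then 1 else 0)"
  by (simp add: profile_prob_def PiE_empty_domain)

lemma profile_prob_False [simp]: "profile_prob n R p (\<lambda>_. False) = 0"
  by (simp add: profile_prob_def)

lemma profile_prob_Suc:
  assumes "finite R"
  shows "profile_prob (Suc n) R p E = (\<Sum>y\<in>R. p y * profile_prob n R p (\<lambda>g. E (g(n := y))))"
proof -
  have prod: "(\<Prod>i<Suc n. p ((g(n := y)) i)) = p y * (\<Prod>i<n. p (g i))" for g :: "nat \<Rightarrow> 'a" and y
    by (simp add: prod.lessThan_Suc mult.commute)
  have inj: "inj_on (\<lambda>(y, g). g(n := y)) (R \<times> ({..<n} \<rightarrow>\<^sub>E R))"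
    using inj_combinator [of n "{..<n}" "\<lambda>_. R"] by simp
  have "profile_prob (Suc n) R p E
      = (\<Sum>(y, g) \<in> R \<times> ({..<n} \<rightarrow>\<^sub>E R). if E (g(n := y)) then \<Prod>i<Suc n. p ((g(n := y)) i) else 0)"
    unfolding profile_prob_def lessThan_Suc PiE_insert_eq
    by (subst sum.reindex [OF inj]) (simp add: case_prod_beta')
  also have "\<dots> = (\<Sum>y\<in>R. \<Sum>g \<in> {..<n} \<rightarrow>\<^sub>E R. if E (g(n := y)) then p y * (\<Prod>i<n. p (g i)) else 0)"
    unfolding sum.cartesian_product [symmetric] prod ..
  also have "\<dots> = (\<Sum>y\<in>R. p y * profile_prob n R p (\<lambda>g. E (g(n := y))))"
    unfolding profile_prob_def sum_distrib_left by (intro sum.cong) auto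
  finally show ?thesis .
qed

lemma profile_prob_count_eq:
  assumes "finite R" "S \<subseteq> R"
  shows "profile_prob n R p (\<lambda>f. card {i \<in> {..<n}. f i \<in> S} = j)
       = real (n choose j) * (\<Sum>r\<in>S. p r) ^ j * (\<Sum>r\<in>R - S. p r) ^ (n - j)"
proof (induction n arbitrary: j)
  case 0
  then show ?case
    by (simp add: profile_prob_0)
next
  case (Suc n)
  define qS where "qS = (\<Sum>r\<in>S. p r)"
  define qT where "qT = (\<Sum>r\<in>R - S. p r)"
  have count: "card {i \<in> {..<Suc n}. (g(n := y)) i \<in> S} = card {i \<in> {..<n}. g i \<in> S} + (if y \<in> S then 1 else 0)"
    for g :: "nat \<Rightarrow> 'a" and y
  proof -
    have "{i \<in> {..<Suc n}. (g(n := y)) i \<in> S} = {i \<in> {..<n}. g i \<in> S} \<union> (if y \<in> S then {n} else {})"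
      by (auto simp: less_Suc_eq)
    then show ?thesis
      by (simp add: card_Un_disjoint)
  qed
  have "profile_prob (Suc n) R p (\<lambda>f. card {i \<in> {..<Suc n}. f i \<in> S} = j)
      = (\<Sum>y\<in>R - S. p y * profile_prob n R p (\<lambda>g. card {i \<in> {..<n}. g i \<in> S} = j))
        + (\<Sum>y\<in>S. p y * profile_prob n R p (\<lambda>g. Suc (card {i \<in> {..<n}. g i \<in> S}) = j))"
    unfolding profile_prob_Suc [OF assms(1)] count
    using assms by (subst sum.subset_diff [of S]) auto
  also have "\<dots> = qT * profile_prob n R p (\<lambda>g. card {i \<in> {..<n}. g i \<in> S} = j)
                 + qS * profile_prob n R p (\<lambda>g. Suc (card {i \<in> {..<n}. g i \<in> S}) = j)"
    by (simp add: qS_def qT_def sum_distrib_right)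
  also have "\<dots> = real (Suc n choose j) * qS ^ j * qT ^ (Suc n - j)"
  proof (cases j)
    case 0
    then show ?thesis
      using Suc.IH [of 0] by (simp add: qT_def)
  next
    case (Suc j')
    have IH: "profile_prob n R p (\<lambda>g. card {i \<in> {..<n}. g i \<in> S} = j)
             = real (n choose j) * qS ^ j * qT ^ (n - j)"
      using Suc.IH [of j] by (simp add: qS_def qT_def)
    have IH': "profile_prob n R p (\<lambda>g. Suc (card {i \<in> {..<n}. g i \<in> S}) = j)
             = real (n choose j') * qS ^ j' * qT ^ (n - j')"
      using Suc.IH [of j'] Suc by (simp add: qS_def qT_def)
    have shift: "qT * (real (n choose j) * qS ^ j * qT ^ (n - j)) = real (n choose j) * qS ^ j * qT ^ (n - j')"
    proof (cases "j' < n")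
      case True
      then have "n - j' = Suc (n - j)"
        using Suc by simp
      then show ?thesis
        by simp
    qed (use Suc in simp)
    have "qT * profile_prob n R p (\<lambda>g. card {i \<in> {..<n}. g i \<in> S} = j)
          + qS * profile_prob n R p (\<lambda>g. Suc (card {i \<in> {..<n}. g i \<in> S}) = j)
        = (real (n choose j) + real (n choose j')) * qS ^ j * qT ^ (n - j')"
      unfolding IH IH' shift using Suc by (simp add: algebra_simps)
    also have "\<dots> = real (Suc n choose j) * qS ^ j * qT ^ (Suc n - j)"
      using Suc by simp
    finally show ?thesis .
  qed
  finally show ?case
    by (simp only: qS_def qT_def)
qed

lemma profile_prob_True:
  assumes "finite R"
  shows "profile_prob n R p (\<lambda>_. True) = (\<Sum>r\<in>R. p r) ^ n"
  using prod_sum_PiE [of "{..<n}" "\<lambda>_. R" "\<lambda>_ r. p r"] assms by (simp add: profile_prob_def)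

lemma profile_prob_Not:
  "profile_prob n R p (\<lambda>f. \<not> E f) = profile_prob n R p (\<lambda>_. True) - profile_prob n R p E"
  unfolding profile_prob_def sum_subtractf [symmetric] by (intro sum.cong) auto

lemma profile_prob_mono:
  assumes "\<And>r. r \<in> R \<Longrightarrow> 0 \<le> p r"
    and "\<And>f. f \<in> {..<n} \<rightarrow>\<^sub>E R \<Longrightarrow> E f \<Longrightarrow> E' f"
  shows "profile_prob n R p E \<le> profile_prob n R p E'"
  unfolding profile_prob_def
proof (rule sum_mono)
  fix f assume f: "f \<in> {..<n} \<rightarrow>\<^sub>E R"
  then have "0 \<le> (\<Prod>i<n. p (f i))"
    using assms(1) by (intro prod_nonneg) auto
  then show "(if E f then \<Prod>i<n. p (f i) else 0) \<le> (if E' f then \<Prod>i<n. p (f i) else 0)"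
    using assms(2) [OF f] by auto
qed

lemma profile_prob_cong_support:
  assumes "\<And>f. f \<in> {..<n} \<rightarrow>\<^sub>E R \<Longrightarrow> (\<And>i. i < n \<Longrightarrow> p (f i) \<noteq> 0) \<Longrightarrow> E f \<longleftrightarrow> E' f"
  shows "profile_prob n R p E = profile_prob n R p E'"
  unfolding profile_prob_def
proof (rule sum.cong [OF refl])
  fix f assume "f \<in> {..<n} \<rightarrow>\<^sub>E R"
  then show "(if E f then \<Prod>i<n. p (f i) else 0) = (if E' f then \<Prod>i<n. p (f i) else 0)"
    using assms by (cases "\<exists>i<n. p (f i) = 0") auto
qed

lemma profile_prob_Bex_disjoint:
  assumes "finite C"
    and "\<And>f c c'. c \<in> C \<Longrightarrow> c' \<in> C \<Longrightarrow> E c f \<Longrightarrow> E c' f \<Longrightarrow> c = c'"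
  shows "profile_prob n R p (\<lambda>f. \<exists>c\<in>C. E c f) = (\<Sum>c\<in>C. profile_prob n R p (E c))"
proof -
  have "(if \<exists>c\<in>C. E c f then x else 0) = (\<Sum>c\<in>C. if E c f then x else 0)" for f and x :: real
  proof (cases "\<exists>c\<in>C. E c f")
    case True
    then obtain c0 where "c0 \<in> C" "E c0 f"
      by blast
    then have "(\<Sum>c\<in>C. if E c f then x else 0) = (\<Sum>c\<in>C. if c = c0 then x else 0)"
      using assms(2) by (intro sum.cong) auto
    then show ?thesis
      using True \<open>c0 \<in> C\<close> assms(1) by simp
  qed simp
  then show ?thesis
    unfolding profile_prob_def by (subst sum.swap) simp
qed

lemma profile_prob_majority:
  assumes "finite R" "S \<subseteq> R" "(\<Sum>r\<in>R. p r) = 1"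
  shows "profile_prob n R p (\<lambda>f. real n / 2 < real (card {i \<in> {..<n}. f i \<in> S}))
       = binom_tail (n div 2) n (\<Sum>r\<in>S. p r)"
proof -
  have minority: "\<not> real n / 2 < real m \<longleftrightarrow> (\<exists>j\<in>{0..n div 2}. m = j)" for m
    by auto
  have complement: "(\<Sum>r\<in>R - S. p r) = 1 - (\<Sum>r\<in>S. p r)"
    using assms by (simp add: sum_diff)
  have "profile_prob n R p (\<lambda>f. \<not> real n / 2 < real (card {i \<in> {..<n}. f i \<in> S}))
      = (\<Sum>j = 0..n div 2. profile_prob n R p (\<lambda>f. card {i \<in> {..<n}. f i \<in> S} = j))"
    unfolding minority by (subst profile_prob_Bex_disjoint) auto
  also have "\<dots> = binom_cdf (n div 2) n (\<Sum>r\<in>S. p r)"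
    unfolding profile_prob_count_eq [OF assms(1,2)] binom_cdf_def complement ..
  finally show ?thesis
    using profile_prob_Not [of n R p "\<lambda>f. \<not> real n / 2 < real (card {i \<in> {..<n}. f i \<in> S})"]
    by (simp add: profile_prob_True assms binom_tail_def)
qed

section \<open>Majority first choices and Condorcet winners\<close>

lemma rankings_eq: "rankings = {1, 2, 3, 4, 5, 6}"
  by (auto simp: rankings_def)

lemma ex_less_less_3:
  "(\<exists>i j. i < j \<and> j < (3::nat) \<and> P i j) \<longleftrightarrow> P 0 1 \<or> P 0 2 \<or> P 1 2"
proof
  assume "\<exists>i j. i < j \<and> j < (3::nat) \<and> P i j"
  then obtain i j where "i < j" "j < (3::nat)" "P i j"
    by blast
  then have "(i = 0 \<and> j = 1) \<or> (i = 0 \<and> j = 2) \<or> (i = 1 \<and> j = 2)"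
    by linarith
  then show "P 0 1 \<or> P 0 2 \<or> P 1 2"
    using \<open>P i j\<close> by auto
next
  have "(0::nat) < 1" "(0::nat) < 2" "(1::nat) < 2" "(1::nat) < 3" "(2::nat) < 3"
    by simp_all
  then show "P 0 1 \<or> P 0 2 \<or> P 1 2 \<Longrightarrow> \<exists>i j. i < j \<and> j < (3::nat) \<and> P i j"
    by blast
qed

lemma prefers_iff_nth:
  "prefers r a b \<longleftrightarrow>
     (ranking_list r ! 0 = a \<and> ranking_list r ! 1 = b) \<or>
     (ranking_list r ! 0 = a \<and> ranking_list r ! 2 = b) \<or>
     (ranking_list r ! 1 = a \<and> ranking_list r ! 2 = b)"
proof -
  have "length (ranking_list r) = 3"
    by simp
  then show ?thesis
    unfolding prefers_def by (simp only: ex_less_less_3)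
qed
definition top_ranked :: "nat \<Rightarrow> nat set" where
  "top_ranked c = {r \<in> rankings. hd (ranking_list r) = c}"

lemma top_ranked_eq: "top_ranked 1 = {1, 2}" "top_ranked 2 = {3, 4}" "top_ranked 3 = {5, 6}"
  unfolding top_ranked_def rankings_eq by auto

lemma prefers_top_ranked:
  assumes "r \<in> top_ranked c" "d \<in> candidates" "d \<noteq> c"
  shows "prefers r c d"
  using assms unfolding top_ranked_def rankings_eq candidates_def prefers_iff_nth by auto

definition majority_top :: "nat \<Rightarrow> (nat \<Rightarrow> nat) \<Rightarrow> nat \<Rightarrow> bool" where
  "majority_top n f c \<longleftrightarrow> real n / 2 < real (card {i \<in> {..<n}. f i \<in> top_ranked c})"

lemma majority_top_imp_condorcet_winner:
  assumes "c \<in> candidates" "majority_top n f c"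
  shows "condorcet_winner n f c"
  unfolding condorcet_winner_def
proof (intro conjI ballI impI)
  fix d assume "d \<in> candidates" "d \<noteq> c"
  then have "card {i \<in> {..<n}. f i \<in> top_ranked c} \<le> card {i \<in> {..<n}. prefers (f i) c d}"
    by (intro card_mono) (auto intro: prefers_top_ranked)
  then show "real n / 2 < real (card {i \<in> {..<n}. prefers (f i) c d})"
    using assms(2) unfolding majority_top_def by linarith
qed (fact assms(1))

lemma disjoint_majorities_False:
  assumes "A \<inter> B = {}"
    and "real n / 2 < real (card {i \<in> {..<n}. f i \<in> A})"
    and "real n / 2 < real (card {i \<in> {..<n}. f i \<in> B})"
  shows False
proof -
  have "card {i \<in> {..<n}. f i \<in> A} + card {i \<in> {..<n}. f i \<in> B}
      = card ({i \<in> {..<n}. f i \<in> A} \<union> {i \<in> {..<n}. f i \<in> B})"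
    using assms(1) by (intro card_Un_disjoint [symmetric]) auto
  also have "\<dots> \<le> n"
    by (rule card_mono [of "{..<n}", simplified]) auto
  finally show False
    using assms(2,3) by linarith
qed

lemma majority_top_unique:
  assumes "majority_top n f c" "majority_top n f c'"
  shows "c = c'"
  using disjoint_majorities_False [of "top_ranked c" "top_ranked c'" n f] assms
  unfolding majority_top_def top_ranked_def by blast

lemma profile_prob_majority_top:
  assumes "prob_vector p"
  shows "profile_prob n rankings p (\<lambda>f. \<exists>c\<in>candidates. majority_top n f c)
       = (\<Sum>c\<in>candidates. binom_tail (n div 2) n (\<Sum>r\<in>top_ranked c. p r))"
proof -
  have R: "finite rankings" "(\<Sum>r\<in>rankings. p r) = 1" "top_ranked c \<subseteq> rankings" for c
    using assms by (auto simp: rankings_def prob_vector_def top_ranked_def)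
  have "profile_prob n rankings p (\<lambda>f. \<exists>c\<in>candidates. majority_top n f c)
      = (\<Sum>c\<in>candidates. profile_prob n rankings p (\<lambda>f. majority_top n f c))"
  proof (rule profile_prob_Bex_disjoint)
    show "finite candidates"
      by (simp add: candidates_def)
  qed (rule majority_top_unique)
  also have "\<dots> = (\<Sum>c\<in>candidates. binom_tail (n div 2) n (\<Sum>r\<in>top_ranked c. p r))"
    unfolding majority_top_def using R by (intro sum.cong refl profile_prob_majority)
  finally show ?thesis .
qed

lemma P3_eq_profile_prob: "P3 n p = profile_prob n rankings p (has_condorcet_winner n)"
  by (simp add: P3_def profile_prob_def)

lemma P3_ge_majority_top:
  assumes "prob_vector p"
  shows "(\<Sum>c\<in>candidates. binom_tail (n div 2) n (\<Sum>r\<in>top_ranked c. p r)) \<le> P3 n p"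
  unfolding P3_eq_profile_prob profile_prob_majority_top [OF assms, symmetric]
proof (rule profile_prob_mono)
  show "0 \<le> p r" if "r \<in> rankings" for r
    using assms that by (simp add: prob_vector_def)
  show "has_condorcet_winner n f" if "\<exists>c\<in>candidates. majority_top n f c" for f
    using that majority_top_imp_condorcet_winner unfolding has_condorcet_winner_def by blast
qed

lemma P3_eq_majority_top:
  assumes "prob_vector p"
    and beaten: "\<And>c. c \<in> candidates \<Longrightarrow> \<exists>d\<in>candidates. d \<noteq> c \<and>
                   (\<forall>r\<in>rankings. p r \<noteq> 0 \<longrightarrow> prefers r c d \<longrightarrow> r \<in> top_ranked c)"
  shows "P3 n p = (\<Sum>c\<in>candidates. binom_tail (n div 2) n (\<Sum>r\<in>top_ranked c. p r))"
  unfolding P3_eq_profile_prob profile_prob_majority_top [OF assms(1), symmetric]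
proof (rule profile_prob_cong_support)
  fix f assume f: "f \<in> {..<n} \<rightarrow>\<^sub>E rankings" and support: "\<And>i. i < n \<Longrightarrow> p (f i) \<noteq> 0"
  show "has_condorcet_winner n f \<longleftrightarrow> (\<exists>c\<in>candidates. majority_top n f c)"
  proof
    assume "has_condorcet_winner n f"
    then obtain c where c: "condorcet_winner n f c"
      unfolding has_condorcet_winner_def by blast
    then have "c \<in> candidates"
      by (simp add: condorcet_winner_def)
    then obtain d where d: "d \<in> candidates" "d \<noteq> c"
      and only_top: "\<And>r. r \<in> rankings \<Longrightarrow> p r \<noteq> 0 \<Longrightarrow> prefers r c d \<Longrightarrow> r \<in> top_ranked c"
      using beaten by blast
    have "{i \<in> {..<n}. prefers (f i) c d} \<subseteq> {i \<in> {..<n}. f i \<in> top_ranked c}"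
      using f support only_top by auto
    then have "card {i \<in> {..<n}. prefers (f i) c d} \<le> card {i \<in> {..<n}. f i \<in> top_ranked c}"
      by (intro card_mono) auto
    moreover have "real n / 2 < real (card {i \<in> {..<n}. prefers (f i) c d})"
      using c d unfolding condorcet_winner_def by blast
    ultimately show "\<exists>c\<in>candidates. majority_top n f c"
      using \<open>c \<in> candidates\<close> unfolding majority_top_def by force
  next
    assume "\<exists>c\<in>candidates. majority_top n f c"
    then show "has_condorcet_winner n f"
      using majority_top_imp_condorcet_winner unfolding has_condorcet_winner_def by blast
  qed
qed

lemma sum_candidates: "(\<Sum>c\<in>candidates. g c) = g 1 + g 2 + g 3"
  by (simp add: candidates_def add.assoc)

lemma binom_tail_top_ranked_ge:
  assumes "prob_vector p" "k < n" "n \<le> 2 * k + 1"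
  shows "3 * binom_tail k n (1/3) \<le> (\<Sum>c\<in>candidates. binom_tail k n (\<Sum>r\<in>top_ranked c. p r))"
proof -
  have "\<forall>r\<in>{1, 2, 3, 4, 5, 6}. 0 \<le> p r" "p 1 + p 2 + p 3 + p 4 + p 5 + p 6 = 1"
    using assms(1) by (simp_all add: prob_vector_def rankings_eq)
  then show ?thesis
    using binom_tail_third_le [OF assms(2,3), of "p 1 + p 2" "p 3 + p 4" "p 5 + p 6"]
    unfolding sum_candidates top_ranked_eq by simp
qed

lemma P3_condorcet_cycle:
  assumes "Q = {1, 4, 5} \<or> Q = {2, 3, 6}"
  shows "P3 n (\<lambda>r. if r \<in> Q then 1/3 else 0) = 3 * binom_tail (n div 2) n (1/3)"
proof -
  have "prob_vector (\<lambda>r. if r \<in> Q then 1/3 else 0)"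
    using assms by (elim disjE) (simp_all add: prob_vector_def rankings_eq)
  moreover have "\<exists>d\<in>candidates. d \<noteq> c \<and> (\<forall>r\<in>rankings. (if r \<in> Q then 1/3 else 0) \<noteq> (0::real)
                   \<longrightarrow> prefers r c d \<longrightarrow> r \<in> top_ranked c)"
    if "c \<in> candidates" for c
  proof -
    have "c = 1 \<or> c = 2 \<or> c = 3"
      using that by (simp add: candidates_def)
    then show ?thesis
      using assms unfolding candidates_def
      by (elim disjE) (simp_all add: prefers_iff_nth top_ranked_def rankings_eq)
  qed
  ultimately have "P3 n (\<lambda>r. if r \<in> Q then 1/3 else 0)
      = (\<Sum>c\<in>candidates. binom_tail (n div 2) n (\<Sum>r\<in>top_ranked c. if r \<in> Q then 1/3 else 0))"
    by (rule P3_eq_majority_top)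
  also have "\<dots> = 3 * binom_tail (n div 2) n (1/3)"
    using assms unfolding sum_candidates top_ranked_eq by (elim disjE) simp_all
  finally show ?thesis .
qed

theorem mainTheorem9:
  fixes n :: nat
  assumes "n \<ge> 1"
  shows "(\<forall>p. prob_vector p \<longrightarrow> P3 n p \<ge> 3 * (1 - binom_cdf (n div 2) n (1/3)))
    \<and> 3 * (1 - binom_cdf (n div 2) n (1/3)) =
           3 * real n * real ((n - 1) choose (n div 2)) *
             integral {0..1/3} (\<lambda>t::real. t ^ (n div 2) * (1 - t) ^ (n - n div 2 - 1))
    \<and> P3 n (\<lambda>r. if r \<in> {1,4,5} then 1/3 else 0) = 3 * (1 - binom_cdf (n div 2) n (1/3))
    \<and> P3 n (\<lambda>r. if r \<in> {2,3,6} then 1/3 else 0) = 3 * (1 - binom_cdf (n div 2) n (1/3))"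
proof -
  have k: "n div 2 < n" "n \<le> 2 * (n div 2) + 1"
    using assms by simp_all
  have "3 * binom_tail (n div 2) n (1/3) \<le> P3 n p" if "prob_vector p" for p
    using binom_tail_top_ranked_ge [OF that k] P3_ge_majority_top [OF that] by (rule order_trans)
  moreover have "3 * binom_tail (n div 2) n (1/3)
      = 3 * real n * real ((n - 1) choose (n div 2)) *
          integral {0..1/3} (\<lambda>t::real. t ^ (n div 2) * (1 - t) ^ (n - n div 2 - 1))"
    using binom_tail_eq_integral [OF k(1), of "1/3"] by simp
  moreover have "P3 n (\<lambda>r. if r \<in> {1,4,5} then 1/3 else 0) = 3 * binom_tail (n div 2) n (1/3)"
    and "P3 n (\<lambda>r. if r \<in> {2,3,6} then 1/3 else 0) = 3 * binom_tail (n div 2) n (1/3)"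
    by (rule P3_condorcet_cycle, simp)+
  ultimately show ?thesis
    unfolding binom_tail_def [symmetric] by blast
qed

end
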